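(* For any real numbers $t\ge1$ and $\varepsilon>0$, there exist an (indivisible-goods) instance, a $t$-cohesive group $N^*$, and an allocation $A$ that GreedyEJR-M can output on this instance (for some admissible choice of the pairs selected in Step 2) such that the average satisfaction of $N^*$ with respect to $A$ is at most $\lfloor t\rfloor\cdot\left(1-\frac{\lfloor t\rfloor+1}{2t}\right)+\varepsilon$.
   Context: Model: There is a set of agents $N=\{1,\dots,n\}$. The resource $R$ consists of a cake $C=[0,c]$ for a real $c\ge 0$ and a set of indivisible goods $G=\{g_1,\dots,g_m\}$ for an integer $m\ge 0$, with $\max(c,m)>0$. A piece of cake is a union of finitely many disjoint closed subintervals of $C$; its length $\ell(\cdot)$ is the sum of the lengths of its intervals. A bundle $R'=(C',G')$ consists of a piece of cake $C'\subseteq C$ and a set $G'\subseteq G$; its size is $s(R')=\ell(C')+|G'|$. Each agent $i$ approves a bundle $R_i=(C_i,G_i)$, and her utility for a bundle $R'$ is $u_i(R')=\ell(C_i\cap C')+|G_i\cap G'|$. A parameter $\alpha\in(0,c+m]$ is given; an allocation is a bundle $A$ with $s(A)\le\alpha$. An indivisible-goods instance is one with $c=0$. For a real $t\ge 0$, $N^*\subseteq N$ is $t$-cohesive if $|N^*|\ge t n/\alpha$ and $s(\bigcap_{i\in N^*}R_i)\ge t$. GreedyEJR-M rule: Step 1: set $N'=N$, $R'=\emptyset$. Step 2: let $t^*$ be the largest nonnegative real for which there exist a nonempty $N^*\subseteq N'$ and a bundle $R^*\subseteq R$ such that $N^*$ is $t^*$-cohesive, $R^*\subseteq R_i$ for all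 $i\in N^*$, and $s(R^* )=t^*$; take any such pair $(N^*,R^* )$, remove $N^*$ from $N'$, and add to $R'$ the part of $R^*$ not already in $R'$. Step 3: if $N'=\emptyset$ return $R'$; otherwise go to Step 2. The average satisfaction of a group $N'\subseteq N$ with respect to $A$ is $\frac1{|N'|}\sum_{i\in N'}u_i(A)$. *)

theory Defs
  imports Complex_Main
begin

text \<open>With c = 0 every piece of cake has length 0, so bundles reduce to sets of goods
  and the size of a bundle is its cardinality.\<close>

definition valid_instance :: "nat \<Rightarrow> nat \<Rightarrow> (nat \<Rightarrow> nat set) \<Rightarrow> real \<Rightarrow> bool" where
  "valid_instance n m R \<alpha> \<longleftrightarrow>
     0 < n \<and> 0 < m \<and> (\<forall>i<n. R i \<subseteq> {..<m}) \<and> 0 < \<alpha> \<and> \<alpha> \<le> real m"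

text \<open>S is t-cohesive: |S| \<ge> t n / alpha and the common approved bundle has size \<ge> t
  (the intersection over the empty family is the whole resource).\<close>
definition cohesive :: "nat \<Rightarrow> nat \<Rightarrow> (nat \<Rightarrow> nat set) \<Rightarrow> real \<Rightarrow> real \<Rightarrow> nat set \<Rightarrow> bool" where
  "cohesive n m R \<alpha> t S \<longleftrightarrow>
     S \<subseteq> {..<n} \<and> real (card S) \<ge> t * real n / \<alpha> \<and>
     real (card ({..<m} \<inter> (\<Inter>i\<in>S. R i))) \<ge> t"

definition feasible_pair :: "nat \<Rightarrow> nat \<Rightarrow> (nat \<Rightarrow> nat set) \<Rightarrow> real \<Rightarrow> nat set \<Rightarrow> nat set \<Rightarrow> nat set \<Rightarrow> bool" where
  "feasible_pair n m R \<alpha> Nr S B \<longleftrightarrow>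
     S \<noteq> {} \<and> S \<subseteq> Nr \<and> B \<subseteq> {..<m} \<and> (\<forall>i\<in>S. B \<subseteq> R i) \<and>
     cohesive n m R \<alpha> (real (card B)) S"

definition greedy_choice :: "nat \<Rightarrow> nat \<Rightarrow> (nat \<Rightarrow> nat set) \<Rightarrow> real \<Rightarrow> nat set \<Rightarrow> nat set \<Rightarrow> nat set \<Rightarrow> bool" where
  "greedy_choice n m R \<alpha> Nr S B \<longleftrightarrow>
     feasible_pair n m R \<alpha> Nr S B \<and>
     (\<forall>S' B'. feasible_pair n m R \<alpha> Nr S' B' \<longrightarrow> card B' \<le> card B)"

inductive greedy_run :: "nat \<Rightarrow> nat \<Rightarrow> (nat \<Rightarrow> nat set) \<Rightarrow> real \<Rightarrow> nat set \<Rightarrow> nat set \<Rightarrow> nat set \<Rightarrow> bool"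
  for n m R \<alpha> where
  run_done: "greedy_run n m R \<alpha> {} Rc Rc"
| run_step: "\<lbrakk> Nr \<noteq> {}; greedy_choice n m R \<alpha> Nr S B;
           greedy_run n m R \<alpha> (Nr - S) (Rc \<union> B) A \<rbrakk>
         \<Longrightarrow> greedy_run n m R \<alpha> Nr Rc A"

definition greedy_output :: "nat \<Rightarrow> nat \<Rightarrow> (nat \<Rightarrow> nat set) \<Rightarrow> real \<Rightarrow> nat set \<Rightarrow> bool" where
  "greedy_output n m R \<alpha> A \<longleftrightarrow> greedy_run n m R \<alpha> {..<n} {} A"

definition avg_satisfaction :: "(nat \<Rightarrow> nat set) \<Rightarrow> nat set \<Rightarrow> nat set \<Rightarrow> real" where
  "avg_satisfaction R S A = (\<Sum>i\<in>S. real (card (R i \<inter> A))) / real (card S)"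

end

theory Submission
  imports Defs
begin

(* Let k = floor t, take q large and s = ceil (t q) "target" agents, and choose alpha with
   n / alpha = q, so that a group is l-cohesive iff it has at least l q members sharing l goods.
   Target i approves the k + 1 goods {k..2k}, making the targets t-cohesive, together with the
   prefix {..< (i+1) div q}; in addition, for every level l = 1..k there are k q filler agents
   approving {..<l}. Among the agents of level at most l, fewer than (l+1) q targets exist and
   every filler approves at most l goods, so no feasible pair has more than l goods. Hence
   GreedyEJR-M may serve the agents of level l with {..<l} for l = k, ..., 0 and output {..<k}.
   Target i then gets (i+1) div q goods, on average about k (1 - (k+1)/(2t)), and the rounding
   error is O(1/q). *)

lemma sum_div_block:
  fixes q a r :: nat
  assumes "r \<le> q"
  shows "(\<Sum>j\<in>{a*q..<a*q+r}. j div q) = a * r"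
proof -
  have "j div q = a" if "j \<in> {a*q..<a*q+r}" for j
    using that assms by (intro div_nat_eqI) (auto simp: algebra_simps)
  then show ?thesis by simp
qed

lemma sum_div_full_blocks:
  fixes q k :: nat
  shows "2 * (\<Sum>j<k*q. j div q) + q*k = q*k*k"
proof (induction k)
  case 0 then show ?case by simp
next
  case (Suc k)
  have "(\<Sum>j<Suc k*q. j div q) = (\<Sum>j<k*q. j div q) + (\<Sum>j\<in>{k*q..<k*q+q}. j div q)"
    using sum.atLeastLessThan_concat[of 0 "k*q" "k*q+q" "\<lambda>j. j div q"]
    by (simp add: atLeast0LessThan algebra_simps)
  also have "\<dots> = (\<Sum>j<k*q. j div q) + k*q"
    using sum_div_block[of q q k] by simp
  finally show ?case using Suc.IH by (simp add: algebra_simps)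
qed

lemma sum_div_lessThan:
  fixes q k N :: nat
  assumes "k*q \<le> N" and "N \<le> k*q + q"
  shows "2 * (\<Sum>j<N. j div q) + q*k*(k+1) = 2*k*N"
proof -
  define r where "r = N - k*q"
  have N: "N = k*q + r" and r: "r \<le> q" using assms by (auto simp: r_def)
  have "(\<Sum>j<N. j div q) = (\<Sum>j<k*q. j div q) + (\<Sum>j\<in>{k*q..<k*q+r}. j div q)"
    using sum.atLeastLessThan_concat[of 0 "k*q" "k*q+r" "\<lambda>j. j div q"]
    by (simp add: N atLeast0LessThan)
  also have "\<dots> = (\<Sum>j<k*q. j div q) + k*r"
    using sum_div_block[OF r] by simp
  finally show ?thesis using sum_div_full_blocks[of q k] N by (simp add: algebra_simps)
qed

lemma prefix_average_bound:
  fixes t e K Q S :: real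
  assumes "1 \<le> K" and "K \<le> t" and "0 < e" and "2 \<le> Q * e"
    and "t * Q \<le> S" and "S < t * Q + 1"
  shows "K * (2*S + 2 - Q*(K+1)) / (2*S) \<le> K * (1 - (K+1)/(2*t)) + e"
proof -
  have "0 < Q" using assms(3,4) by (smt (verit) mult_nonpos_nonneg)
  then have "0 < t" "0 < S" using assms(1,2,5) by (smt (verit) mult_pos_pos)+
  have "K*(K+1)*(S - t*Q) \<le> K*(K+1)"
    using assms(1,6) by (intro mult_left_le) auto
  moreover have "K*(K+1) \<le> t*(2*t)" "2*K*t \<le> 2*t*t"
    using assms(1,2) by (intro mult_mono; simp)+
  moreover have "t*t*2 \<le> t*t*(Q*e)" using assms(4) \<open>0 < t\<close> by simp
  moreover have "t*Q*t*e \<le> S*t*e" using assms(5) \<open>0 < t\<close> assms(3) by (simp add: mult.commute)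
  ultimately have "K*(2*S + 2 - Q*(K+1)) * t \<le> S*K*(2*t-K-1) + 2*S*t*e"
    by (simp add: algebra_simps)
  then show ?thesis using \<open>0 < t\<close> \<open>0 < S\<close> by (simp add: field_simps)
qed

locale greedy_ejrm_lower_bound =
  fixes k q s :: nat
  assumes k_pos: "1 \<le> k" and q_pos: "1 \<le> q"
    and s_ge: "k * q \<le> s" and s_less: "s < (k + 1) * q"
begin

(* Agents i < s are the targets, the others fillers. Goods beyond 2k are approved by nobody;
   they only ensure alpha \<le> m. *)

definition "num_agents = s + k * k * q"

definition "num_goods = num_agents + 2 * k + 1"

definition "alpha = real num_agents / real q"

definition "level i = (if i < s then (i + 1) div q else (i - s) div (k * q) + 1)"

definition "approval i = {..<level i} \<union> (if i < s then {k..2 * k} else {})"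

definition "active l = {i. i < num_agents \<and> level i \<le> l}"

definition "level_group l = {i. i < num_agents \<and> level i = l}"

lemma num_agents_pos: "0 < num_agents"
  using k_pos q_pos by (simp add: num_agents_def)

lemma level_le: "i < num_agents \<Longrightarrow> level i \<le> k"
proof (cases "i < s")
  case True
  then have "i + 1 < (k + 1) * q" using s_less by simp
  then have "(i + 1) div q < k + 1" by (rule less_mult_imp_div_less)
  then show ?thesis using True by (simp add: level_def)
next
  case False
  assume "i < num_agents"
  then have "i - s < k * (k * q)" using False by (simp add: num_agents_def)
  then show ?thesis using False by (simp add: level_def less_mult_imp_div_less Suc_leI)
qed

lemma num_agents_div_alpha: "real num_agents / alpha = real q"
  using num_agents_pos q_pos by (simp add: alpha_def)

lemma cohesive_iff:
  "cohesive num_agents num_goods approval alpha t S \<longleftrightarrow>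
     S \<subseteq> {..<num_agents} \<and> t * real q \<le> real (card S) \<and>
     t \<le> real (card ({..<num_goods} \<inter> (\<Inter>i\<in>S. approval i)))"
  using num_agents_div_alpha by (simp add: cohesive_def times_divide_eq_right[symmetric])

lemma feasible_pair_card_le:
  assumes "feasible_pair num_agents num_goods approval alpha (active l) S B"
  shows "card B \<le> l"
proof -
  have S: "S \<subseteq> active l" and appr: "\<forall>i\<in>S. B \<subseteq> approval i"
    and card_S: "card B * q \<le> card S"
    using assms by (auto simp: feasible_pair_def cohesive_iff simp flip: of_nat_mult)
  show ?thesis
  proof (cases "\<exists>i\<in>S. s \<le> i")
    case True
    then obtain i where i: "i \<in> S" "s \<le> i" by blast
    moreover have "approval i = {..<level i}" using i by (simp add: approval_def)
    ultimately have "B \<subseteq> {..<level i}" using appr by blast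
    then have "card B \<le> level i" using card_mono[of "{..<level i}" B] by simp
    also have "level i \<le> l" using i S by (auto simp: active_def)
    finally show ?thesis .
  next
    case False
    have "S \<subseteq> {..<(l + 1) * q - 1}"
    proof
      fix i assume i: "i \<in> S"
      then have "i < s" "level i \<le> l" using False S by (auto simp: active_def)
      then have "(i + 1) div q < l + 1" by (simp add: level_def)
      then show "i \<in> {..<(l + 1) * q - 1}" using q_pos by (simp add: div_less_iff_less_mult)
    qed
    then have "card S < (l + 1) * q"
      using card_mono[of "{..<(l + 1) * q - 1}" S] q_pos by simp
    then have "card B * q < (l + 1) * q" using card_S by linarith
    then have "card B < l + 1" by (simp only: mult_less_cancel2)
    then show ?thesis by simp
  qed
qed

lemma level_group_card:
  assumes "l \<le> k"
  shows "l * q \<le> card (level_group l)"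
proof (cases "l = 0")
  case False
  let ?block = "{s + (l - 1) * (k * q)..<s + l * (k * q)}"
  have "?block \<subseteq> level_group l"
  proof
    fix i assume i: "i \<in> ?block"
    have "l * (k * q) \<le> k * (k * q)" using assms by (rule mult_le_mono1)
    moreover have "i < s + l * (k * q)" using i by simp
    ultimately have "i < s + k * (k * q)" by linarith
    then have "i < num_agents" by (simp add: num_agents_def mult.assoc)
    moreover have "(i - s) div (k * q) = l - 1"
    proof (rule div_nat_eqI)
      show "k * q * (l - 1) \<le> i - s" using i by (simp add: mult.commute le_diff_conv2)
      have "Suc (l - 1) = l" using False by simp
      then show "i - s < k * q * Suc (l - 1)" using i by (simp add: mult.commute less_diff_conv2)
    qed
    ultimately show "i \<in> level_group l"
      using i False by (simp add: level_group_def level_def)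
  qed
  then have "card ?block \<le> card (level_group l)"
    by (intro card_mono) (simp_all add: level_group_def)
  moreover have "card ?block = k * q"
  proof -
    have "l * (k * q) = (l - 1) * (k * q) + k * q" using False by (simp add: mult_eq_if)
    then show ?thesis by simp
  qed
  moreover have "l * q \<le> k * q" using assms by (rule mult_le_mono1)
  ultimately show ?thesis by linarith
qed simp

lemma greedy_choice_level_group:
  assumes "l \<le> k" and "level_group l \<noteq> {}"
  shows "greedy_choice num_agents num_goods approval alpha (active l) (level_group l) {..<l}"
proof -
  have approves: "{..<l} \<subseteq> approval i" if "i \<in> level_group l" for i
    using that by (auto simp: approval_def level_group_def)
  have "{..<l} \<subseteq> {..<num_goods}" using assms(1) by (auto simp: num_goods_def)
  then have "{..<l} \<subseteq> {..<num_goods} \<inter> (\<Inter>i\<in>level_group l. approval i)"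
    using approves by (intro Int_greatest INT_greatest)
  then have "l \<le> card ({..<num_goods} \<inter> (\<Inter>i\<in>level_group l. approval i))"
    using card_mono[of _ "{..<l}"] by (metis card_lessThan finite_Int finite_lessThan)
  moreover have "real l * real q \<le> real (card (level_group l))"
    using level_group_card[OF assms(1)] by (simp flip: of_nat_mult)
  ultimately have "feasible_pair num_agents num_goods approval alpha (active l) (level_group l) {..<l}"
    using assms(2) approves \<open>{..<l} \<subseteq> {..<num_goods}\<close>
    by (auto simp: feasible_pair_def cohesive_iff level_group_def active_def)
  then show ?thesis using feasible_pair_card_le by (auto simp: greedy_choice_def)
qed

lemma greedy_run_from_level:
  "l \<le> k \<Longrightarrow> Rc \<union> {..<l} = {..<k} \<Longrightarrow>
     greedy_run num_agents num_goods approval alpha (active l) Rc {..<k}"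
proof (induction l arbitrary: Rc)
  case 0
  then have Rc: "Rc = {..<k}" by simp
  show ?case
  proof (cases "active 0 = {}")
    case True
    then show ?thesis using Rc by (simp add: greedy_run.run_done)
  next
    case False
    have "level_group 0 = active 0" by (auto simp: level_group_def active_def)
    then have "greedy_choice num_agents num_goods approval alpha (active 0) (active 0) {}"
      using greedy_choice_level_group[of 0] False by simp
    moreover have "greedy_run num_agents num_goods approval alpha (active 0 - active 0) (Rc \<union> {}) {..<k}"
      using Rc by (simp add: greedy_run.run_done)
    ultimately show ?thesis by (rule greedy_run.run_step[OF False])
  qed
next
  case (Suc l)
  have "Suc l * q \<le> card (level_group (Suc l))" using level_group_card Suc.prems(1) .
  then have group_ne: "level_group (Suc l) \<noteq> {}" using q_pos by (auto simp del: mult_Suc)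
  then have active_ne: "active (Suc l) \<noteq> {}" by (auto simp: active_def level_group_def)
  have remaining: "active (Suc l) - level_group (Suc l) = active l"
    by (auto simp: active_def level_group_def)
  have "greedy_choice num_agents num_goods approval alpha
      (active (Suc l)) (level_group (Suc l)) {..<Suc l}"
    using greedy_choice_level_group Suc.prems(1) group_ne .
  moreover have "greedy_run num_agents num_goods approval alpha
      (active (Suc l) - level_group (Suc l)) (Rc \<union> {..<Suc l}) {..<k}"
  proof -
    have "{..<k} \<union> {..<l} = {..<k}" using Suc.prems(1) by auto
    then show ?thesis using Suc.IH[of "{..<k}"] Suc.prems remaining by simp
  qed
  ultimately show ?case by (rule greedy_run.run_step[OF active_ne])
qed

lemma greedy_output_prefix: "greedy_output num_agents num_goods approval alpha {..<k}"
proof -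
  have "active k = {..<num_agents}" using level_le by (auto simp: active_def)
  then show ?thesis using greedy_run_from_level[of k "{}"] by (simp add: greedy_output_def)
qed

lemma valid_instance: "valid_instance num_agents num_goods approval alpha"
proof -
  have "approval i \<subseteq> {..<num_goods}" if "i < num_agents" for i
    using level_le[OF that] by (auto simp: approval_def num_goods_def)
  moreover have "0 < alpha" "alpha \<le> real num_agents"
    using q_pos num_agents_pos by (simp_all add: alpha_def divide_le_eq)
  ultimately show ?thesis using num_agents_pos by (simp add: valid_instance_def num_goods_def)
qed

lemma card_prefix_le_alpha: "real (card {..<k}) \<le> alpha"
proof -
  have "real k * real q \<le> real num_agents" using s_ge by (simp add: num_agents_def flip: of_nat_mult)
  then show ?thesis using q_pos by (simp add: alpha_def le_divide_eq)
qed

lemma cohesive_targets: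
  assumes "t * real q \<le> real s" and "t \<le> real k + 1"
  shows "cohesive num_agents num_goods approval alpha t {..<s}"
proof -
  have "{k..2 * k} \<subseteq> {..<num_goods} \<inter> (\<Inter>i\<in>{..<s}. approval i)"
    by (auto simp: approval_def num_goods_def)
  then have "card {k..2 * k} \<le> card ({..<num_goods} \<inter> (\<Inter>i\<in>{..<s}. approval i))"
    by (intro card_mono) auto
  then have "t \<le> real (card ({..<num_goods} \<inter> (\<Inter>i\<in>{..<s}. approval i)))"
    using assms(2) by simp
  moreover have "{..<s} \<subseteq> {..<num_agents}" by (auto simp: num_agents_def)
  ultimately show ?thesis using assms(1) by (simp add: cohesive_iff)
qed

lemma avg_satisfaction_targets:
  "avg_satisfaction approval {..<s} {..<k} =
     real k * (2 * real s + 2 - real q * (real k + 1)) / (2 * real s)"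
proof -
  define total where "total = (\<Sum>j<s + 1. j div q)"
  have "card (approval i \<inter> {..<k}) = (i + 1) div q" if "i < s" for i
  proof -
    have "level i \<le> k" using that level_le by (simp add: num_agents_def)
    then have "approval i \<inter> {..<k} = {..<level i}" using that by (auto simp: approval_def)
    then show ?thesis using that by (simp add: level_def)
  qed
  then have "(\<Sum>i<s. real (card (approval i \<inter> {..<k}))) = real total"
    by (simp add: total_def sum.lessThan_Suc_shift del: sum.lessThan_Suc)
  moreover have "2 * total + q * k * (k + 1) = 2 * k * (s + 1)"
    unfolding total_def using s_ge s_less by (intro sum_div_lessThan) (simp_all add: algebra_simps)
  then have "2 * real total + real q * real k * (real k + 1) = 2 * real k * (real s + 1)"
    by (metis (mono_tags) of_nat_add of_nat_mult of_nat_numeral of_nat_1 of_nat_eq_iff)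
  moreover have "0 < s" using s_ge k_pos q_pos by (metis less_le_trans mult_pos_pos less_eq_Suc_le One_nat_def)
  ultimately show ?thesis by (simp add: avg_satisfaction_def field_simps)
qed

end

lemma exists_group_size:
  fixes t e :: real
  assumes "1 \<le> t" and "0 < e"
  obtains q s :: nat where "1 \<le> q" and "2 \<le> real q * e"
    and "t * real q \<le> real s" and "real s < t * real q + 1"
    and "nat \<lfloor>t\<rfloor> * q \<le> s" and "s < (nat \<lfloor>t\<rfloor> + 1) * q"
proof -
  define k where "k = nat \<lfloor>t\<rfloor>"
  have k: "real k \<le> t" "t < real k + 1" using assms(1) by (simp_all add: k_def)
  define q where "q = nat \<lceil>max (2 / e) (1 / (real k + 1 - t))\<rceil> + 1"
  have "2 / e < real q" "1 / (real k + 1 - t) < real q"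
    unfolding q_def by linarith+
  then have q: "2 \<le> real q * e" "1 < real q * (real k + 1 - t)"
    using assms(2) k(2) by (simp_all add: field_simps)
  define s where "s = nat \<lceil>t * real q\<rceil>"
  have s: "t * real q \<le> real s" "real s < t * real q + 1"
    using assms(1) by (simp_all add: s_def) linarith+
  have "real k * real q \<le> t * real q" using k(1) by (simp add: mult_right_mono)
  then have "k * q \<le> s" using s(1) by (simp flip: of_nat_mult)
  moreover have "real s < real ((k + 1) * q)" using s(2) q(2) by (simp add: algebra_simps)
  then have "s < (k + 1) * q" by (simp only: of_nat_less_iff)
  moreover have "1 \<le> q" by (simp add: q_def)
  ultimately show ?thesis using that q(1) s by (simp add: k_def)
qed

theorem mainTheorem18:
  fixes t \<epsilon> :: real
  assumes "t \<ge> 1" and "\<epsilon> > 0"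
  shows "\<exists>n m R \<alpha> S A.
           valid_instance n m R \<alpha> \<and>
           cohesive n m R \<alpha> t S \<and>
           greedy_output n m R \<alpha> A \<and> real (card A) \<le> \<alpha> \<and>
           avg_satisfaction R S A
             \<le> of_int \<lfloor>t\<rfloor> * (1 - (of_int \<lfloor>t\<rfloor> + 1) / (2 * t)) + \<epsilon>"
proof -
  define k where "k = nat \<lfloor>t\<rfloor>"
  have k: "of_int \<lfloor>t\<rfloor> = real k" "1 \<le> k" "real k \<le> t" "t \<le> real k + 1"
    using assms(1) by (simp_all add: k_def le_nat_iff)
  obtain q s where q: "1 \<le> q" "2 \<le> real q * \<epsilon>" and s: "t * real q \<le> real s" "real s < t * real q + 1"
    and "k * q \<le> s" "s < (k + 1) * q"
    using exists_group_size[OF assms] unfolding k_def by blast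
  then interpret greedy_ejrm_lower_bound k q s using k(2) by unfold_locales
  have "avg_satisfaction approval {..<s} {..<k} \<le> real k * (1 - (real k + 1) / (2 * t)) + \<epsilon>"
    unfolding avg_satisfaction_targets
    using prefix_average_bound[of "real k" t \<epsilon> "real q" "real s"] k q s assms(2) by simp
  then show ?thesis
    using valid_instance cohesive_targets[OF s(1) k(4)] greedy_output_prefix card_prefix_le_alpha k(1)
    by fastforce
qed

end
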